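(* Let $E,F,G$ be finite-dimensional Hilbert spaces with fixed orthonormal bases, and set $R=E$, $S=F\otimes G$, $A=E\otimes F$, $B=G$, so that $R\otimes S=A\otimes B=E\otimes F\otimes G$. Let $U$ be any unitary on $E\otimes F\otimes G$, let $|0\rangle\in R$ be a fixed basis vector, and define channels from $S$ to $A$ by $$\mathcal N(\rho)=\operatorname{Tr}_B\big[U(|0\rangle\langle 0|^R\otimes\rho)U^\dagger\big],\qquad \bar{\mathcal N}(\rho)=\operatorname{Tr}_B\big[\bar U(|0\rangle\langle 0|^R\otimes\rho)U^T\big],$$ where $\bar U$ is the entrywise complex conjugate of $U$ in the product basis and $U^T$ its transpose. Let $S_1,S_2$ be two copies of $S$ and $|\Phi\rangle^{S_1S_2}=|S|^{-1/2}\sum_{i}|i\rangle|i\rangle$ the maximally entangled state in the fixed basis. Then the state $(\mathcal N\otimes\bar{\mathcal N})(|\Phi\rangle\langle\Phi|^{S_1S_2})$ on $A_1\otimes A_2$ has an eigenvalue at least $$\frac{|S|}{|A||B|}=\frac{1}{|E|}.$$ More precisely, $\langle\Phi|^{A_1A_2}(\mathcal N\otimes\bar{\mathcal N})(\Phi^{S_1S_2})|\Phi\rangle^{A_1A_2}\ge 1/|E|$, where $|\Phi\rangle^{A_1A_2}$ is the maximally entangled state on two copies of $A$ in the fixed basis.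
   Context: $|X|$ denotes the dimension of $X$. Here $\mathcal N$ acts on $S_1$ with output $A_1$ (using $U$ on $E_1F_1G_1$) and $\bar{\mathcal N}$ acts on $S_2$ with output $A_2$ (using $\bar U$ on $E_2F_2G_2$). *)

theory Defs
  imports Complex_Main
begin

(* Operators on a finite-dimensional Hilbert space with a fixed orthonormal basis
indexed by a finite type 'i are represented by their matrices in that basis,
i.e. as functions 'i \<Rightarrow> 'i \<Rightarrow> complex.  Tensor products of spaces correspond to
product index types, with the product basis *)

type_synonym 'i op = "'i \<Rightarrow> 'i \<Rightarrow> complex"

definition unitary_op :: "('i::finite) op \<Rightarrow> bool" where
  "unitary_op U \<longleftrightarrow>
     (\<forall>a b. (\<Sum>c\<in>UNIV. cnj (U c a) * U c b) = (if a = b then 1 else 0)) \<and>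
     (\<forall>a b. (\<Sum>c\<in>UNIV. U a c * cnj (U b c)) = (if a = b then 1 else 0))"

definition ket_bra :: "'i \<Rightarrow> 'i \<Rightarrow> 'i op" where
  "ket_bra i j = (\<lambda>p q. if p = i \<and> q = j then 1 else 0)"

(* Space ordering: R \<otimes> S = E \<otimes> (F \<otimes> G) and A \<otimes> B = (E \<otimes> F) \<otimes> G, both identified
with the index type 'e \<times> 'f \<times> 'g (product basis).
N(\<rho>) = Tr_B [U (|0><0| \<otimes> \<rho>) U^dagger], with |0> = |e0> *)
definition chanN :: "('e::finite \<times> 'f::finite \<times> 'g::finite) op \<Rightarrow> 'e
     \<Rightarrow> ('f \<times> 'g) op \<Rightarrow> ('e \<times> 'f) op" where
  "chanN U e0 \<rho> = (\<lambda>(x,y) (x',y'). \<Sum>z\<in>UNIV. \<Sum>s\<in>UNIV. \<Sum>s'\<in>UNIV.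
      U (x,y,z) (e0,s) * \<rho> s s' * cnj (U (x',y',z) (e0,s')))"

(* Nbar(\<rho>) = Tr_B [Ubar (|0><0| \<otimes> \<rho>) U^T], Ubar entrywise conjugate *)
definition chanNbar :: "('e::finite \<times> 'f::finite \<times> 'g::finite) op \<Rightarrow> 'e
     \<Rightarrow> ('f \<times> 'g) op \<Rightarrow> ('e \<times> 'f) op" where
  "chanNbar U e0 \<rho> = (\<lambda>(x,y) (x',y'). \<Sum>z\<in>UNIV. \<Sum>s\<in>UNIV. \<Sum>s'\<in>UNIV.
      cnj (U (x,y,z) (e0,s)) * \<rho> s s' * U (x',y',z) (e0,s'))"

(* Tensor product of two linear maps on operators, defined on the matrix-unit basis
and extended linearly: (M1 \<otimes> M2)(X) = \<Sum> X_{(i,k),(j,l)} M1(|i><j|) \<otimes> M2(|k><l|) *)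
definition map_tensor :: "('s1::finite op \<Rightarrow> 'a1 op) \<Rightarrow> ('s2::finite op \<Rightarrow> 'a2 op)
     \<Rightarrow> ('s1 \<times> 's2) op \<Rightarrow> ('a1 \<times> 'a2) op" where
  "map_tensor M1 M2 X = (\<lambda>(a1,a2) (b1,b2).
      \<Sum>i\<in>UNIV. \<Sum>j\<in>UNIV. \<Sum>k\<in>UNIV. \<Sum>l\<in>UNIV.
        X (i,k) (j,l) * M1 (ket_bra i j) a1 b1 * M2 (ket_bra k l) a2 b2)"

definition max_ent :: "('i::finite \<times> 'i) \<Rightarrow> complex" where
  "max_ent = (\<lambda>(i,j). if i = j then 1 / csqrt (of_nat (card (UNIV :: 'i set))) else 0)"

definition proj :: "('i \<Rightarrow> complex) \<Rightarrow> 'i op" where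
  "proj v = (\<lambda>p q. v p * cnj (v q))"

definition expval :: "('i::finite \<Rightarrow> complex) \<Rightarrow> 'i op \<Rightarrow> complex" where
  "expval v X = (\<Sum>p\<in>UNIV. \<Sum>q\<in>UNIV. cnj (v p) * X p q * v q)"

end

theory Submission
  imports Defs "HOL-Analysis.Convex"
begin

(* Let V = U(|e0> \<otimes> -) : S \<rightarrow> A \<otimes> B be the isometry behind N and cut its
   matrix into the slices v_z = (<a,z|V|i>)_{a,i}, one vector in A \<otimes> S for every basis
   vector z of the environment B.  Evaluated on matrix units, both channels are entries of
   the frame operator K = \<Sum>_z |v_z><v_z| (N gives K, Nbar its conjugate), so the overlap
   <\<Phi>|(N \<otimes> Nbar)(\<Phi>)|\<Phi>> equals ||K||_F^2 / (|A| |S|) with ||.||_F the Frobenius norm;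
   in particular it is real.  K has the same Frobenius norm as the Gram matrix
   G_{zw} = <v_w, v_z>, and any n \<times> n matrix satisfies ||G||_F^2 \<ge> |tr G|^2 / n.  Since V is
   an isometry, tr G = \<Sum>_z ||v_z||^2 = |S|, hence the overlap is at least
   |S| / (|A| |B|) = 1/|E|. *)

lemma sum_UNIV_prod:
  "(\<Sum>p\<in>(UNIV::('a::finite \<times> 'b::finite) set). f p) = (\<Sum>a\<in>UNIV. \<Sum>b\<in>UNIV. f (a, b))"
  by (simp add: sum.cartesian_product flip: UNIV_Times_UNIV)

lemma sum_if_const_cond:
  "(\<Sum>x\<in>A. if P then f x else 0) = (if P then (\<Sum>x\<in>A. f x) else 0)"
  by simp

definition gram :: "('z \<Rightarrow> 'p::finite \<Rightarrow> complex) \<Rightarrow> 'z op" where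
  "gram v z w = (\<Sum>p\<in>UNIV. v z p * cnj (v w p))"

definition frame_op :: "('z::finite \<Rightarrow> 'p \<Rightarrow> complex) \<Rightarrow> 'p op" where
  "frame_op v p q = (\<Sum>z\<in>UNIV. v z p * cnj (v z q))"

(* Both operators have the same Frobenius norm: each squared norm equals
   \<Sum>_{z,w} |<v w, v z>|^2, after expanding and reordering a fourfold sum. *)
lemma frobenius_frame_op_eq_gram:
  fixes v :: "'z::finite \<Rightarrow> 'p::finite \<Rightarrow> complex"
  shows "(\<Sum>p\<in>UNIV. \<Sum>q\<in>UNIV. (cmod (frame_op v p q))\<^sup>2)
       = (\<Sum>z\<in>UNIV. \<Sum>w\<in>UNIV. (cmod (gram v z w))\<^sup>2)"
proof -
  define t where "t p q z w = v z p * cnj (v z q) * (cnj (v w p) * v w q)" for p q z w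
  have "complex_of_real (\<Sum>p\<in>UNIV. \<Sum>q\<in>UNIV. (cmod (frame_op v p q))\<^sup>2)
      = (\<Sum>p\<in>UNIV. \<Sum>q\<in>UNIV. \<Sum>z\<in>UNIV. \<Sum>w\<in>UNIV. t p q z w)"
    unfolding of_real_sum complex_norm_square
    by (simp add: frame_op_def cnj_sum sum_product t_def)
  also have "\<dots> = (\<Sum>p\<in>UNIV. \<Sum>z\<in>UNIV. \<Sum>q\<in>UNIV. \<Sum>w\<in>UNIV. t p q z w)"
    by (rule sum.cong[OF refl], rule sum.swap)
  also have "\<dots> = (\<Sum>z\<in>UNIV. \<Sum>p\<in>UNIV. \<Sum>q\<in>UNIV. \<Sum>w\<in>UNIV. t p q z w)"
    by (rule sum.swap)
  also have "\<dots> = (\<Sum>z\<in>UNIV. \<Sum>p\<in>UNIV. \<Sum>w\<in>UNIV. \<Sum>q\<in>UNIV. t p q z w)"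
    by (rule sum.cong[OF refl], rule sum.cong[OF refl], rule sum.swap)
  also have "\<dots> = (\<Sum>z\<in>UNIV. \<Sum>w\<in>UNIV. \<Sum>p\<in>UNIV. \<Sum>q\<in>UNIV. t p q z w)"
    by (rule sum.cong[OF refl], rule sum.swap)
  also have "\<dots> = complex_of_real (\<Sum>z\<in>UNIV. \<Sum>w\<in>UNIV. (cmod (gram v z w))\<^sup>2)"
    unfolding of_real_sum complex_norm_square
    by (simp add: gram_def cnj_sum sum_product t_def ac_simps)
  finally show ?thesis by (simp only: of_real_eq_iff)
qed

lemma trace_sq_le_frobenius:
  fixes M :: "'i::finite op"
  shows "(cmod (\<Sum>z\<in>UNIV. M z z))\<^sup>2
       \<le> real (card (UNIV::'i set)) * (\<Sum>z\<in>UNIV. \<Sum>w\<in>UNIV. (cmod (M z w))\<^sup>2)"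
proof -
  have "(cmod (\<Sum>z\<in>UNIV. M z z))\<^sup>2 \<le> (\<Sum>z\<in>UNIV. cmod (M z z))\<^sup>2"
    by (intro power_mono norm_sum norm_ge_zero)
  also have "\<dots> \<le> (\<Sum>z\<in>UNIV. (cmod (M z z))\<^sup>2) * real (card (UNIV::'i set))"
    by (rule sum_squared_le_sum_of_squares)
  also have "\<dots> \<le> (\<Sum>z\<in>UNIV. \<Sum>w\<in>UNIV. (cmod (M z w))\<^sup>2) * real (card (UNIV::'i set))"
    by (intro mult_right_mono sum_mono member_le_sum) auto
  finally show ?thesis by (simp only: mult.commute)
qed

lemma cnj_max_ent: "cnj (max_ent p) = max_ent p"
  unfolding max_ent_def by (auto simp: csqrt_of_real[of "real _", simplified] split: prod.splits)

lemma expval_max_ent: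
  "expval (max_ent :: ('a::finite \<times> 'a) \<Rightarrow> complex) T
   = (\<Sum>a\<in>UNIV. \<Sum>b\<in>UNIV. T (a, a) (b, b)) / of_nat (card (UNIV::'a set))"
  unfolding expval_def mult.assoc sum_distrib_left[symmetric] sum_UNIV_prod cnj_max_ent
  unfolding max_ent_def
  by (simp add: if_distrib[where f="\<lambda>t. t * _"] if_distrib[where f="\<lambda>t. _ * t"]
      if_distrib[where f="\<lambda>t. t / _"] sum_divide_distrib flip: of_real_mult cong: if_cong)

lemma tensor_max_ent:
  "map_tensor M1 M2 (proj (max_ent :: ('s::finite \<times> 's) \<Rightarrow> complex)) (a1,a2) (b1,b2)
   = (\<Sum>i\<in>UNIV. \<Sum>j\<in>UNIV. M1 (ket_bra i j) a1 b1 * M2 (ket_bra i j) a2 b2) / of_nat (card (UNIV::'s set))"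
  unfolding map_tensor_def proj_def cnj_max_ent
  unfolding max_ent_def
  by (simp add: if_distrib[where f="\<lambda>t. t * _"] if_distrib[where f="\<lambda>t. _ * t"]
      if_distrib[where f="\<lambda>t. t / _"] sum_divide_distrib flip: of_real_mult cong: if_cong)

(* isometry_slices U e0 z (a, i) = <a, z| U |e0, i>: the slice of V = U(|e0> \<otimes> -) at the
   environment basis vector z, viewed as a vector in A \<otimes> S. *)
definition isometry_slices ::
    "('e::finite \<times> 'f::finite \<times> 'g::finite) op \<Rightarrow> 'e \<Rightarrow> 'g \<Rightarrow> ('e \<times> 'f) \<times> ('f \<times> 'g) \<Rightarrow> complex" where
  "isometry_slices U e0 z = (\<lambda>(a, i). U (fst a, snd a, z) (e0, i))"

lemma chanN_ket_bra:
  "chanN U e0 (ket_bra i j) a b = frame_op (isometry_slices U e0) (a, i) (b, j)"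
  by (cases a; cases b)
     (simp add: chanN_def ket_bra_def frame_op_def isometry_slices_def
        if_distrib[where f="\<lambda>t. t * _"] if_distrib[where f="\<lambda>t. _ * t"]
        sum_if_const_cond flip: if_if_eq_conj cong: if_cong)

lemma chanNbar_ket_bra:
  "chanNbar U e0 (ket_bra i j) a b = cnj (frame_op (isometry_slices U e0) (a, i) (b, j))"
  by (cases a; cases b)
     (simp add: chanNbar_def ket_bra_def frame_op_def isometry_slices_def
        if_distrib[where f="\<lambda>t. t * _"] if_distrib[where f="\<lambda>t. _ * t"]
        sum_if_const_cond flip: if_if_eq_conj cong: if_cong)

lemma overlap_eq_frobenius:
  fixes U :: "('e::finite \<times> 'f::finite \<times> 'g::finite) op" and e0 :: 'e
  shows "expval (max_ent :: ('e \<times> 'f) \<times> ('e \<times> 'f) \<Rightarrow> complex)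
           (map_tensor (chanN U e0) (chanNbar U e0) (proj (max_ent :: ('f \<times> 'g) \<times> ('f \<times> 'g) \<Rightarrow> complex)))
       = of_real ((\<Sum>p\<in>UNIV. \<Sum>q\<in>UNIV. (cmod (frame_op (isometry_slices U e0) p q))\<^sup>2)
                  / (real (card (UNIV::('e \<times> 'f) set)) * real (card (UNIV::('f \<times> 'g) set))))"
proof -
  define K where "K = frame_op (isometry_slices U e0)"
  have "expval (max_ent :: ('e \<times> 'f) \<times> ('e \<times> 'f) \<Rightarrow> complex)
          (map_tensor (chanN U e0) (chanNbar U e0) (proj (max_ent :: ('f \<times> 'g) \<times> ('f \<times> 'g) \<Rightarrow> complex)))
      = (\<Sum>a\<in>UNIV. \<Sum>b\<in>UNIV. \<Sum>i\<in>UNIV. \<Sum>j\<in>UNIV. K (a, i) (b, j) * cnj (K (a, i) (b, j)))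
        / (of_nat (card (UNIV::('e \<times> 'f) set)) * of_nat (card (UNIV::('f \<times> 'g) set)))"
    unfolding expval_max_ent tensor_max_ent chanN_ket_bra chanNbar_ket_bra K_def[symmetric]
    by (simp add: sum_divide_distrib mult.commute)
  also have "(\<Sum>a\<in>UNIV. \<Sum>b\<in>UNIV. \<Sum>i\<in>UNIV. \<Sum>j\<in>UNIV. K (a, i) (b, j) * cnj (K (a, i) (b, j)))
      = (\<Sum>a\<in>UNIV. \<Sum>i\<in>UNIV. \<Sum>b\<in>UNIV. \<Sum>j\<in>UNIV. K (a, i) (b, j) * cnj (K (a, i) (b, j)))"
    by (rule sum.cong[OF refl], rule sum.swap)
  also have "\<dots> = of_real (\<Sum>p\<in>UNIV. \<Sum>q\<in>UNIV. (cmod (K p q))\<^sup>2)"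
    unfolding of_real_sum complex_norm_square sum_UNIV_prod ..
  finally show ?thesis
    unfolding K_def by (simp only: of_real_divide of_real_mult of_real_of_nat_eq)
qed

lemma unitary_column_norm:
  assumes "unitary_op U"
  shows "(\<Sum>c\<in>UNIV. (cmod (U c x))\<^sup>2) = 1"
proof -
  have "(\<Sum>c\<in>UNIV. U c x * cnj (U c x)) = 1"
    using assms unfolding unitary_op_def by (simp add: mult.commute)
  then have "complex_of_real (\<Sum>c\<in>UNIV. (cmod (U c x))\<^sup>2) = 1"
    unfolding of_real_sum complex_norm_square .
  then show ?thesis by (simp only: of_real_eq_1_iff)
qed

lemma trace_gram_isometry_slices:
  fixes U :: "('e::finite \<times> 'f::finite \<times> 'g::finite) op" and e0 :: 'e
  assumes "unitary_op U"
  shows "(\<Sum>z\<in>UNIV. gram (isometry_slices U e0) z z) = of_nat (card (UNIV::('f \<times> 'g) set))"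
proof -
  define w where "w i a z = (cmod (U (fst a, snd a, z) (e0, i)))\<^sup>2" for i a z
  have "(\<Sum>z\<in>UNIV. gram (isometry_slices U e0) z z)
      = of_real (\<Sum>z\<in>UNIV. \<Sum>p\<in>UNIV. (cmod (isometry_slices U e0 z p))\<^sup>2)"
    unfolding gram_def of_real_sum complex_norm_square ..
  also have "(\<Sum>z\<in>UNIV. \<Sum>p\<in>UNIV. (cmod (isometry_slices U e0 z p))\<^sup>2)
      = (\<Sum>a\<in>UNIV. \<Sum>i\<in>UNIV. \<Sum>z\<in>UNIV. w i a z)"
    by (subst sum.swap) (simp add: sum_UNIV_prod isometry_slices_def w_def)
  also have "\<dots> = (\<Sum>i\<in>(UNIV::('f \<times> 'g) set). \<Sum>a\<in>UNIV. \<Sum>z\<in>UNIV. w i a z)"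
    by (rule sum.swap)
  also have "\<dots> = (\<Sum>i\<in>(UNIV::('f \<times> 'g) set). \<Sum>c\<in>UNIV. (cmod (U c (e0, i)))\<^sup>2)"
    by (simp add: sum_UNIV_prod w_def)
  also have "\<dots> = real (card (UNIV::('f \<times> 'g) set))"
    by (simp add: unitary_column_norm[OF assms])
  finally show ?thesis by simp
qed

lemma frobenius_frame_op_lower_bound:
  fixes U :: "('e::finite \<times> 'f::finite \<times> 'g::finite) op" and e0 :: 'e
  assumes "unitary_op U"
  shows "(real (card (UNIV::('f \<times> 'g) set)))\<^sup>2
       \<le> real (card (UNIV::'g set))
         * (\<Sum>p\<in>UNIV. \<Sum>q\<in>UNIV. (cmod (frame_op (isometry_slices U e0) p q))\<^sup>2)"
  using trace_sq_le_frobenius[of "gram (isometry_slices U e0)"]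
  unfolding frobenius_frame_op_eq_gram trace_gram_isometry_slices[OF assms] norm_of_nat .

theorem lemma2:
  fixes U :: "('e::finite \<times> 'f::finite \<times> 'g::finite) op" and e0 :: 'e
  assumes "unitary_op U"
  shows "Im (expval (max_ent :: ('e \<times> 'f) \<times> ('e \<times> 'f) \<Rightarrow> complex)
              (map_tensor (chanN U e0) (chanNbar U e0)
                 (proj (max_ent :: ('f \<times> 'g) \<times> ('f \<times> 'g) \<Rightarrow> complex)))) = 0
       \<and> Re (expval (max_ent :: ('e \<times> 'f) \<times> ('e \<times> 'f) \<Rightarrow> complex)
              (map_tensor (chanN U e0) (chanNbar U e0)
                 (proj (max_ent :: ('f \<times> 'g) \<times> ('f \<times> 'g) \<Rightarrow> complex))))
           \<ge> 1 / real (card (UNIV :: 'e set))"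
proof -
  define Q where "Q = (\<Sum>p\<in>UNIV. \<Sum>q\<in>UNIV. (cmod (frame_op (isometry_slices U e0) p q))\<^sup>2)"
  define nE where "nE = card (UNIV :: 'e set)"
  define nF where "nF = card (UNIV :: 'f set)"
  define nG where "nG = card (UNIV :: 'g set)"
  have dims: "card (UNIV :: ('e \<times> 'f) set) = nE * nF" "card (UNIV :: ('f \<times> 'g) set) = nF * nG"
    unfolding nE_def nF_def nG_def by (simp_all add: card_cartesian_product flip: UNIV_Times_UNIV)
  have pos: "nE > 0" "nF > 0" "nG > 0"
    unfolding nE_def nF_def nG_def by (simp_all add: finite_UNIV_card_ge_0)
  have "(real (nF * nG))\<^sup>2 \<le> real nG * Q"
    using frobenius_frame_op_lower_bound[OF assms, of e0] by (simp add: Q_def dims nG_def)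
  then have "1 / real nE \<le> Q / (real (nE * nF) * real (nF * nG))"
    using pos by (simp add: field_simps power2_eq_square)
  then show ?thesis
    using overlap_eq_frobenius[of U e0] by (simp add: Q_def dims nE_def)
qed

end
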